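(* Let $q_1=(1,0,0)$, $q_2=(-1,0,0)$, $q_3=(0,1,0)$, $q_4=(0,-1,0)$, $q_5=(0,0,1)$, $q_6=(0,0,-1)$ be the vertices of a regular octahedron in $\mathbb{R}^3$, let $t\in(0,1)$ and let $q_{j+6}=tq_j$ for $j=1,\dots,6$. Suppose that positive masses $m_1,\dots,m_{12}$ placed at $q_1,\dots,q_{12}$ form a central configuration. Then $m_1=\dots=m_6$ and $m_7=\dots=m_{12}$.
   Context: A configuration $q=(q_1,\dots,q_N)$ of distinct points in $\mathbb{R}^3$ with masses $m_1,\dots,m_N$ is a central configuration if there exists $c\in\mathbb{R}$ such that $\sum_{j\neq i} m_j\left(\frac{1}{|q_j-q_i|^3}-c\right)(q_j-q_i)=0$ for all $i=1,\dots,N$. *)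

theory Defs
  imports "HOL-Analysis.Analysis"
begin

definition central_configuration ::
  "nat \<Rightarrow> (nat \<Rightarrow> real) \<Rightarrow> (nat \<Rightarrow> real^3) \<Rightarrow> bool" where
  "central_configuration N m q \<longleftrightarrow>
     (\<forall>i\<in>{1..N}. \<forall>j\<in>{1..N}. i \<noteq> j \<longrightarrow> q i \<noteq> q j) \<and>
     (\<exists>c::real. \<forall>i\<in>{1..N}.
        (\<Sum>j\<in>{1..N}-{i}. (m j * (1 / norm (q j - q i) ^ 3 - c)) *\<^sub>R (q j - q i)) = 0)"

definition octa :: "nat \<Rightarrow> real^3" where
  "octa j = (if j = 1 then vector [1, 0, 0] else if j = 2 then vector [-1, 0, 0]
     else if j = 3 then vector [0, 1, 0] else if j = 4 then vector [0, -1, 0]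
     else if j = 5 then vector [0, 0, 1] else vector [0, 0, -1])"

definition nested_octa :: "real \<Rightarrow> nat \<Rightarrow> real^3" where
  "nested_octa t j = (if j \<le> 6 then octa j else t *\<^sub>R octa (j - 6))"

end

theory Submission
  imports Defs
begin

(*
  On the k-th coordinate axis let x = m(2k-1) - m(2k) and y = m(2k+5) - m(2k+6) be the
  differences of the two outer and of the two inner masses. The k-th components of the
  balance equations at an outer and at an inner vertex off that axis, and the sum of those
  at the two inner vertices on it, form a homogeneous linear system in x and y whose
  coefficients still contain c. Eliminating c leaves a 2x2 system whose determinant is
  positive for 0 < t < 1, so antipodal masses agree. After that, subtracting the balance
  equations at corresponding vertices of two different axes removes c altogether, and the
  resulting 2x2 system for m 1 - m(2k-1) and m 7 - m(2k+5) has coefficients of fixed signs,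
  hence a nonzero determinant.
*)

definition inv_cube :: "real \<Rightarrow> real" where
  "inv_cube r = 1 / r ^ 3"

lemma mult_inv_cube: "r * inv_cube r = 1 / r\<^sup>2"
  by (simp add: inv_cube_def power2_eq_square power3_eq_cube)

lemma inv_cube_mult: "inv_cube (r * s) = inv_cube r * inv_cube s"
  by (simp add: inv_cube_def power_mult_distrib)

lemma inv_cube_strict_antimono: "0 < r \<Longrightarrow> r < s \<Longrightarrow> inv_cube s < inv_cube r"
  unfolding inv_cube_def by (simp add: divide_strict_left_mono power_strict_mono)

lemma inv_cube_pos: "0 < r \<Longrightarrow> 0 < inv_cube r"
  by (simp add: inv_cube_def)

lemma inv_cube_le_one: "1 \<le> r \<Longrightarrow> inv_cube r \<le> 1"
  unfolding inv_cube_def by (simp add: one_le_power)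

lemma mult_diff_squares_le_diff_cubes:
  fixes p q :: "'a::linordered_idom"
  assumes "q \<le> p"
  shows "p * (p\<^sup>2 - q\<^sup>2) \<le> p ^ 3 - q ^ 3"
proof -
  have "0 \<le> q\<^sup>2 * (p - q)" using assms by simp
  then show ?thesis by (simp add: algebra_simps power2_eq_square power3_eq_cube)
qed

lemma homogeneous_2x2_trivial:
  fixes a b c d x y :: "'a::field"
  assumes "a * x + b * y = 0" "c * x + d * y = 0" "a * d - b * c \<noteq> 0"
  shows "x = 0 \<and> y = 0"
proof -
  have "(a * d - b * c) * x = d * (a * x + b * y) - b * (c * x + d * y)"
    and "(a * d - b * c) * y = a * (c * x + d * y) - c * (a * x + b * y)"
    by (simp_all add: algebra_simps)
  then have "(a * d - b * c) * x = 0" "(a * d - b * c) * y = 0"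
    using assms(1,2) by simp_all
  with assms(3) show ?thesis by simp
qed

text \<open>The term j = i vanishes, so the sum may run over all indices.\<close>
definition central_equations ::
    "nat \<Rightarrow> (nat \<Rightarrow> real) \<Rightarrow> (nat \<Rightarrow> real^3) \<Rightarrow> real \<Rightarrow> bool" where
  "central_equations N m q c \<longleftrightarrow> (\<forall>i\<in>{1..N}. \<forall>k.
     (\<Sum>j = 1..N. m j * (inv_cube (norm (q j - q i)) - c) * (q j - q i) $ k) = 0)"

lemma central_configuration_equations:
  assumes "central_configuration N m q"
  obtains c where "central_equations N m q c"
proof -
  from assms obtain c where c: "\<forall>i\<in>{1..N}.
      (\<Sum>j\<in>{1..N} - {i}. (m j * (1 / norm (q j - q i) ^ 3 - c)) *\<^sub>R (q j - q i)) = 0"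
    unfolding central_configuration_def by blast
  have "central_equations N m q c"
    unfolding central_equations_def
  proof (intro ballI allI)
    fix i k assume "i \<in> {1..N}"
    then have "(\<Sum>j = 1..N. (m j * (inv_cube (norm (q j - q i)) - c)) *\<^sub>R (q j - q i)) = 0"
      using c by (simp add: inv_cube_def sum_diff1)
    from arg_cong[where f = "\<lambda>v. v $ k", OF this]
    show "(\<Sum>j = 1..N. m j * (inv_cube (norm (q j - q i)) - c) * (q j - q i) $ k) = 0"
      by simp
  qed
  then show thesis by (rule that)
qed

lemma mult_inv_cube_sum_eq:
  fixes t :: real
  assumes "t\<^sup>2 \<noteq> 1"
  shows "(1 - t) * inv_cube (1 - t) + (1 + t) * inv_cube (1 + t) = 2 * (1 + t\<^sup>2) / (1 - t\<^sup>2)\<^sup>2"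
proof -
  have "t \<noteq> 1" "t \<noteq> -1" using assms by auto
  then have "1 - t \<noteq> 0" "1 + t \<noteq> 0" "1 - t\<^sup>2 \<noteq> 0" using assms by auto
  then show ?thesis unfolding mult_inv_cube by (simp add: field_simps) algebra
qed

lemma axis_asymmetry_determinant_pos:
  fixes t :: real
  assumes "0 < t" "t < 1"
  defines "S \<equiv> inv_cube (sqrt 2)" and "W \<equiv> inv_cube (sqrt (1 + t\<^sup>2))"
    and "V \<equiv> (1 - t) * inv_cube (1 - t) + (1 + t) * inv_cube (1 + t)"
  shows "0 < (S - W) * (2 * t * inv_cube (2 * t) - 2 * t * W)
              - t * (W - inv_cube (sqrt 2 * t)) * (V - 2 * S)"
    (is "0 < ?D")
proof -
  have T: "t ^ 3 * inv_cube t = 1" using assms(1) by (simp add: inv_cube_def)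
  have "t\<^sup>2 * ?D = (S - W) * (t ^ 3 * inv_cube t / 4 - 2 * t ^ 3 * W)
      - (t ^ 3 * W - S * (t ^ 3 * inv_cube t)) * (V - 2 * S)"
    by (simp add: inv_cube_mult S_def[symmetric] inv_cube_def[of 2] algebra_simps
        power2_eq_square power3_eq_cube)
  then have identity:
      "t\<^sup>2 * ?D = S / 4 - W / 4 + 2 * (t ^ 3 * W\<^sup>2) + (S - t ^ 3 * W) * V - 2 * S\<^sup>2"
    unfolding T by (simp add: field_simps power2_eq_square)
  txt \<open>With these p and q one has S = p^3, t^3 W = q^3 and V = 1 / ((p^2 - q^2) (1 - t^2)),
    so that (S - t^3 W) V \<ge> p > 1/2.\<close>
  define p where "p = 1 / sqrt 2"
  define q where "q = t / sqrt (1 + t\<^sup>2)"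
  have p: "0 \<le> p" "p\<^sup>2 = 1 / 2" "S = p ^ 3"
    by (simp_all add: p_def S_def inv_cube_def power_divide)
  have q: "t ^ 3 * W = q ^ 3" "q\<^sup>2 = t\<^sup>2 / (1 + t\<^sup>2)"
    by (simp_all add: q_def W_def inv_cube_def power_divide)
  have t2: "0 < 1 - t\<^sup>2" "1 - t\<^sup>2 \<le> 1"
    using assms(1,2) by (simp_all add: abs_square_less_1)
  have "1 + t\<^sup>2 \<noteq> 0" using zero_le_power2[of t] by linarith
  then have pq: "p\<^sup>2 - q\<^sup>2 = (1 - t\<^sup>2) / (2 * (1 + t\<^sup>2))"
    unfolding p q by (simp add: field_simps)
  have V: "V = 2 * (1 + t\<^sup>2) / (1 - t\<^sup>2)\<^sup>2"
    unfolding V_def using t2 by (intro mult_inv_cube_sum_eq) simp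
  have "0 \<le> p\<^sup>2 - q\<^sup>2" unfolding pq using t2 by simp
  then have "q\<^sup>2 \<le> p\<^sup>2" by simp
  then have "q \<le> p" using p(1) by (rule power2_le_imp_le)
  have pqV: "(p\<^sup>2 - q\<^sup>2) * V = 1 / (1 - t\<^sup>2)"
    unfolding pq V using t2(1) \<open>1 + t\<^sup>2 \<noteq> 0\<close>
    by (simp add: power2_eq_square[of "1 - t\<^sup>2"])
  have "p \<le> p / (1 - t\<^sup>2)" using t2 p(1) by (simp add: le_divide_eq mult_left_le)
  also have "\<dots> = p * (p\<^sup>2 - q\<^sup>2) * V" by (simp only: mult.assoc pqV) simp
  also have "\<dots> \<le> (p ^ 3 - q ^ 3) * V"
    using mult_diff_squares_le_diff_cubes[OF \<open>q \<le> p\<close>] V t2 by (intro mult_right_mono) simp_all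
  finally have "p \<le> (S - t ^ 3 * W) * V" by (simp only: p q)
  moreover have "1 / 2 < p"
    using real_less_lsqrt[of 2 2] by (simp add: p_def)
  moreover have "S\<^sup>2 = (p\<^sup>2) ^ 3" unfolding p(3) by (simp flip: power_mult)
  then have "S\<^sup>2 = 1 / 8" unfolding p(2) by (simp add: power_divide)
  moreover have "W \<le> 1" unfolding W_def by (simp add: inv_cube_le_one)
  moreover have "0 \<le> S" "0 \<le> t ^ 3 * W\<^sup>2"
    using assms(1) by (simp_all add: S_def inv_cube_def)
  ultimately have "0 < t\<^sup>2 * ?D" unfolding identity by linarith
  then show ?thesis by (simp add: zero_less_mult_iff)
qed

text \<open>Components along axis k of the balance at an outer and at an inner vertex off axis k,
  and of the sum of the balances at the two inner vertices on axis k.\<close>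
definition axis_asymmetry_equations :: "real \<Rightarrow> real \<Rightarrow> real \<Rightarrow> real \<Rightarrow> bool" where
  "axis_asymmetry_equations t c x y \<longleftrightarrow>
     (inv_cube (sqrt 2) - c) * x + t * (inv_cube (sqrt (1 + t\<^sup>2)) - c) * y = 0 \<and>
     (inv_cube (sqrt (1 + t\<^sup>2)) - c) * x + t * (inv_cube (sqrt 2 * t) - c) * y = 0 \<and>
     ((1 - t) * inv_cube (1 - t) + (1 + t) * inv_cube (1 + t) - 2 * c) * x
       + 2 * t * (inv_cube (2 * t) - c) * y = 0"

lemma axis_asymmetry_equations_trivial:
  assumes "0 < t" "t < 1" "axis_asymmetry_equations t c x y"
  shows "x = 0 \<and> y = 0"
proof (rule homogeneous_2x2_trivial)
  show "(inv_cube (sqrt 2) - inv_cube (sqrt (1 + t\<^sup>2))) * x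
      + t * (inv_cube (sqrt (1 + t\<^sup>2)) - inv_cube (sqrt 2 * t)) * y = 0"
    and "((1 - t) * inv_cube (1 - t) + (1 + t) * inv_cube (1 + t) - 2 * inv_cube (sqrt 2)) * x
      + (2 * t * inv_cube (2 * t) - 2 * t * inv_cube (sqrt (1 + t\<^sup>2))) * y = 0"
    using assms(3) unfolding axis_asymmetry_equations_def by (simp_all add: algebra_simps)
  show "(inv_cube (sqrt 2) - inv_cube (sqrt (1 + t\<^sup>2)))
        * (2 * t * inv_cube (2 * t) - 2 * t * inv_cube (sqrt (1 + t\<^sup>2)))
      - t * (inv_cube (sqrt (1 + t\<^sup>2)) - inv_cube (sqrt 2 * t))
        * ((1 - t) * inv_cube (1 - t) + (1 + t) * inv_cube (1 + t) - 2 * inv_cube (sqrt 2)) \<noteq> 0"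
    using axis_asymmetry_determinant_pos[OF assms(1,2)] by simp
qed

text \<open>Differences of the balance at corresponding outer, resp. inner, vertices of axis 1 and
  axis k, once antipodal masses agree; the constant c cancels.\<close>
definition axis_difference_equations :: "real \<Rightarrow> real \<Rightarrow> real \<Rightarrow> bool" where
  "axis_difference_equations t x y \<longleftrightarrow>
     (2 * inv_cube (sqrt 2) - 2 * inv_cube 2) * x
       + (2 * inv_cube (sqrt (1 + t\<^sup>2)) - (1 - t) * inv_cube (1 - t) - (1 + t) * inv_cube (1 + t)) * y
       = 0 \<and>
     ((1 - t) * inv_cube (1 - t) - (1 + t) * inv_cube (1 + t) + 2 * t * inv_cube (sqrt (1 + t\<^sup>2))) * x
       + 2 * t * (inv_cube (sqrt 2 * t) - inv_cube (2 * t)) * y = 0"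

lemma axis_difference_equations_trivial:
  assumes "0 < t" "t < 1" "axis_difference_equations t x y"
  shows "x = 0 \<and> y = 0"
proof -
  define a where "a = 2 * inv_cube (sqrt 2) - 2 * inv_cube 2"
  define b where
    "b = 2 * inv_cube (sqrt (1 + t\<^sup>2)) - (1 - t) * inv_cube (1 - t) - (1 + t) * inv_cube (1 + t)"
  define c where
    "c = (1 - t) * inv_cube (1 - t) - (1 + t) * inv_cube (1 + t) + 2 * t * inv_cube (sqrt (1 + t\<^sup>2))"
  define d where "d = 2 * t * (inv_cube (sqrt 2 * t) - inv_cube (2 * t))"
  have "sqrt 2 < 2" using real_less_lsqrt[of 2 2] by simp
  then have "0 < a" "0 < d"
    using assms(1) by (simp_all add: a_def d_def inv_cube_strict_antimono)
  have t2: "0 < 1 - t\<^sup>2" "1 - t\<^sup>2 \<le> 1"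
    using assms(1,2) by (simp_all add: abs_square_less_1)
  then have "t\<^sup>2 \<noteq> 1" by simp
  have "0 < 1 + t\<^sup>2" by (simp add: add_pos_nonneg)
  moreover have "(1 - t\<^sup>2)\<^sup>2 \<le> 1" using t2 by (simp add: power_le_one)
  ultimately have "2 * (1 + t\<^sup>2) \<le> 2 * (1 + t\<^sup>2) / (1 - t\<^sup>2)\<^sup>2"
    using divide_left_mono[of "(1 - t\<^sup>2)\<^sup>2" 1 "2 * (1 + t\<^sup>2)"] t2 by simp
  moreover have "2 < 2 * (1 + t\<^sup>2)" using assms(1) by simp
  moreover have "inv_cube (sqrt (1 + t\<^sup>2)) \<le> 1" by (simp add: inv_cube_le_one)
  ultimately have "b < 0"
    unfolding b_def using mult_inv_cube_sum_eq[OF \<open>t\<^sup>2 \<noteq> 1\<close>] by linarith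
  have "1 / (1 + t)\<^sup>2 < 1 / (1 - t)\<^sup>2"
    using assms(1,2) by (simp add: divide_strict_left_mono power_strict_mono)
  moreover have "0 < t * inv_cube (sqrt (1 + t\<^sup>2))"
    using assms(1) by (intro mult_pos_pos inv_cube_pos) (simp_all add: add_pos_nonneg)
  ultimately have "0 < c" unfolding c_def mult_inv_cube by linarith
  have "a * d - b * c \<noteq> 0"
    using mult_pos_pos[OF \<open>0 < a\<close> \<open>0 < d\<close>] mult_neg_pos[OF \<open>b < 0\<close> \<open>0 < c\<close>]
    by linarith
  moreover have "a * x + b * y = 0" "c * x + d * y = 0"
    using assms(3) unfolding axis_difference_equations_def a_def b_def c_def d_def by simp_all
  ultimately show ?thesis using homogeneous_2x2_trivial by blast
qed

lemma norm_vec3: "norm (x :: real^3) = sqrt ((x $ 1)\<^sup>2 + (x $ 2)\<^sup>2 + (x $ 3)\<^sup>2)"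
  by (simp add: norm_vec_def L2_set_def sum_3)

lemma sum_atLeastAtMost_1_12:
  "sum f {1..12::nat} = f 1 + f 2 + f 3 + f 4 + f 5 + f 6 + f 7 + f 8 + f 9 + f 10 + f 11 + f 12"
  by (simp add: numeral_eq_Suc add.assoc)

lemma nested_octa_axis_asymmetry:
  assumes "0 < t" "t < 1" "central_equations 12 m (nested_octa t) c" "k \<in> {1, 2, 3}"
  shows "axis_asymmetry_equations t c (m (2 * k - 1) - m (2 * k)) (m (2 * k + 5) - m (2 * k + 6))"
proof -
  note E = assms(3)[unfolded central_equations_def sum_atLeastAtMost_1_12, rule_format]
  note evaluate = nested_octa_def octa_def norm_vec3 real_sqrt_mult
    add.commute[of "t\<^sup>2" 1] add.commute[of t 1]
  from assms(4) have "k = 1 \<or> k = 2 \<or> k = 3" by simp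
  then show ?thesis
  proof (elim disjE)
    assume k: "k = 1"
    show ?thesis using E[of 3 1] E[of 9 1] E[of 7 1] E[of 8 1] assms(1,2)
      unfolding k axis_asymmetry_equations_def by (simp add: evaluate) (simp add: algebra_simps)
  next
    assume k: "k = 2"
    show ?thesis using E[of 1 2] E[of 7 2] E[of 9 2] E[of 10 2] assms(1,2)
      unfolding k axis_asymmetry_equations_def by (simp add: evaluate) (simp add: algebra_simps)
  next
    assume k: "k = 3"
    show ?thesis using E[of 1 3] E[of 7 3] E[of 11 3] E[of 12 3] assms(1,2)
      unfolding k axis_asymmetry_equations_def by (simp add: evaluate) (simp add: algebra_simps)
  qed
qed

lemma nested_octa_axis_difference:
  assumes "0 < t" "t < 1" "central_equations 12 m (nested_octa t) c"
    and "\<And>k. k \<in> {1, 2, 3} \<Longrightarrow> m (2 * k - 1) = m (2 * k) \<and> m (2 * k + 5) = m (2 * k + 6)"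
    and "k \<in> {2, 3}"
  shows "axis_difference_equations t (m 1 - m (2 * k - 1)) (m 7 - m (2 * k + 5))"
proof -
  note E = assms(3)[unfolded central_equations_def sum_atLeastAtMost_1_12, rule_format]
  have antipodal: "m 2 = m 1" "m 4 = m 3" "m 6 = m 5" "m 8 = m 7" "m 10 = m 9" "m 12 = m 11"
    using assms(4)[of 1] assms(4)[of 2] assms(4)[of 3] by simp_all
  note evaluate = nested_octa_def octa_def norm_vec3 real_sqrt_mult
    add.commute[of "t\<^sup>2" 1] add.commute[of t 1] antipodal
  from assms(5) have "k = 2 \<or> k = 3" by simp
  then show ?thesis
  proof
    assume k: "k = 2"
    show ?thesis using E[of 1 1] E[of 3 2] E[of 7 1] E[of 9 2] assms(1,2)
      unfolding k axis_difference_equations_def by (simp add: evaluate) (simp add: algebra_simps)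
  next
    assume k: "k = 3"
    show ?thesis using E[of 1 1] E[of 5 3] E[of 7 1] E[of 11 3] assms(1,2)
      unfolding k axis_difference_equations_def by (simp add: evaluate) (simp add: algebra_simps)
  qed
qed

theorem theorem8:
  fixes t :: real and m :: "nat \<Rightarrow> real"
  assumes "0 < t" "t < 1"
    and "\<forall>i\<in>{1..12}. m i > 0"
    and "central_configuration 12 m (nested_octa t)"
  shows "(\<forall>i\<in>{1..6}. m i = m 1) \<and> (\<forall>i\<in>{7..12}. m i = m 7)"
proof -
  obtain c where E: "central_equations 12 m (nested_octa t) c"
    using assms(4) by (rule central_configuration_equations)
  have antipodal: "m (2 * k - 1) = m (2 * k) \<and> m (2 * k + 5) = m (2 * k + 6)"
    if "k \<in> {1, 2, 3}" for k
    using axis_asymmetry_equations_trivial[OF assms(1,2) nested_octa_axis_asymmetry[OF assms(1,2) E that]]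
    by simp
  have across: "m 1 = m (2 * k - 1) \<and> m 7 = m (2 * k + 5)" if "k \<in> {2, 3}" for k
    using axis_difference_equations_trivial[OF assms(1,2)
        nested_octa_axis_difference[OF assms(1,2) E antipodal that]]
    by simp
  have "{1..6} = {1, 2, 3, 4, 5, 6 :: nat}" "{7..12} = {7, 8, 9, 10, 11, 12 :: nat}" by auto
  then show ?thesis
    using antipodal[of 1] antipodal[of 2] antipodal[of 3] across[of 2] across[of 3] by simp
qed

end
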